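(* Let $0\to V\to (W,I)\xrightarrow{\sigma}(T,j)\to0$ be a short exact sequence of finite-dimensional complex vector spaces (complex-linear maps) with $\dim_\mathbb{C}T=1$, and let $\Omega$ be an alternating real trilinear form on $W$ such that (i) $\Omega(v_1,v_2,v_3)=0$ for all $v_1,v_2,v_3\in V$; (ii) $\Omega(\xi,\cdot,\cdot)|_V$ is non-degenerate for all $\xi\in W$ with $\sigma(\xi)\neq0$; (iii) $\Omega(I\xi,v_1,v_2)=-\Omega(\xi,v_1,Iv_2)$ for all $\xi\in W$, $v_1,v_2\in V$. Then $\dim_\mathbb{R}V=4n$ for some $n$ and there is a real basis $\{e_1,e_2,a_1^k,a_2^k,b_1^k,b_2^k\}_{k=1}^n$ of $W$ such that $T=\mathrm{span}_\mathbb{R}\{\sigma(e_1),\sigma(e_2)\}$, $V=\mathrm{span}_\mathbb{R}\{a_1^k,a_2^k,b_1^k,b_2^k\}_{k=1}^n$, $Ie_1=e_2$, $Ia_1^k=a_2^k$, $Ib_1^k=-b_2^k$, and, with $\{\epsilon_1,\epsilon_2,\alpha_1^k,\alpha_2^k,\beta_1^k,\beta_2^k\}$ the dual basis, $$\Omega=\sum_{k=1}^n\Big((\beta_1^k\wedge\alpha_1^k+\beta_2^k\wedge\alpha_2^k)\wedge\epsilon_2-(\beta_1^k\wedge\alpha_2^k-\beta_2^k\wedge\alpha_1^k)\wedge\epsilon_1\Big)+\nu\wedge\epsilon_1\wedge\epsilon_2$$ for some linear 1-form $\nu$ vanishing on $e_1,e_2$. *)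

theory Defs
  imports Complex_Main
begin

text \<open>A complex vector space is modelled as a real vector space together with a
  complex structure, i.e. a real-linear map J with J (J x) = - x (J = multiplication by i).
  Complex-linear maps are real-linear maps intertwining the complex structures.\<close>

definition complex_structure :: "('a::real_vector \<Rightarrow> 'a) \<Rightarrow> bool" where
  "complex_structure J \<longleftrightarrow> linear J \<and> (\<forall>x. J (J x) = - x)"

definition trilinear :: "('a::real_vector \<Rightarrow> 'a \<Rightarrow> 'a \<Rightarrow> real) \<Rightarrow> bool" where
  "trilinear F \<longleftrightarrow>
     (\<forall>y z. linear (\<lambda>x. F x y z)) \<and> (\<forall>x z. linear (\<lambda>y. F x y z)) \<and> (\<forall>x y. linear (\<lambda>z. F x y z))"

definition alternating3 :: "('a \<Rightarrow> 'a \<Rightarrow> 'a \<Rightarrow> real) \<Rightarrow> bool" where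
  "alternating3 F \<longleftrightarrow>
     (\<forall>x z. F x x z = 0) \<and> (\<forall>x y. F x y y = 0) \<and> (\<forall>x y. F x y x = 0)"

text \<open>Wedge product of three 1-forms (determinant convention):
  (a \<and> b \<and> c)(x,y,z) = det [a,b,c applied to x,y,z].\<close>

definition wedge3 :: "('a \<Rightarrow> real) \<Rightarrow> ('a \<Rightarrow> real) \<Rightarrow> ('a \<Rightarrow> real) \<Rightarrow> 'a \<Rightarrow> 'a \<Rightarrow> 'a \<Rightarrow> real" where
  "wedge3 a b c x y z =
     a x * (b y * c z - b z * c y) - a y * (b x * c z - b z * c x) + a z * (b x * c y - b y * c x)"

datatype bidx = Ie1 | Ie2 | Ia1 nat | Ia2 nat | Ib1 nat | Ib2 nat

definition bidx_set :: "nat \<Rightarrow> bidx set" where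
  "bidx_set n = {Ie1, Ie2} \<union> (\<Union>k\<in>{1..n}. {Ia1 k, Ia2 k, Ib1 k, Ib2 k})"

definition is_basis_family :: "('i \<Rightarrow> 'a::real_vector) \<Rightarrow> 'i set \<Rightarrow> bool" where
  "is_basis_family B S \<longleftrightarrow> inj_on B S \<and> independent (B ` S) \<and> span (B ` S) = UNIV"

definition is_dual_family :: "('i \<Rightarrow> 'a::real_vector) \<Rightarrow> ('i \<Rightarrow> 'a \<Rightarrow> real) \<Rightarrow> 'i set \<Rightarrow> bool" where
  "is_dual_family B d S \<longleftrightarrow>
     (\<forall>i\<in>S. linear (d i)) \<and> (\<forall>i\<in>S. \<forall>j\<in>S. d i (B j) = (if i = j then 1 else 0))"

end

theory Submission
  imports Defs
begin

(*
  Pick e with sigma e \<noteq> 0. Then sigma e and sigma (I e) = j (sigma e) span the complex line T,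
  so W = R e + R (I e) + V. By (iii) and alternation, omega = Omega e restricted to V is a
  nondegenerate alternating form with omega (I u) v = omega u (I v), and Omega (I e) u v =
  - omega u (I v). Such a form has a normal form: for a \<noteq> 0 there is b with omega b a = 0 and
  omega b (I a) = -1, and the omega-orthogonal of {a, I a, b, I b} is again I-invariant and
  nondegenerate, so induction on the dimension gives a basis a_k, I a_k, b_k, - I b_k of V.
  Finally, by trilinearity and (i), Omega is determined by its slices Omega e and Omega (I e)
  on V together with nu = Omega e (I e), which yields the stated expansion.
*)

section \<open>Linear algebra\<close>

lemma finite_dimensional_real_vector_space:
  fixes S :: "'a::real_vector set"
  assumes "finite S" "span S = UNIV"
  obtains C where "finite_dimensional_vector_space (scaleR :: real \<Rightarrow> 'a \<Rightarrow> 'a) C"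
proof -
  obtain C where C: "C \<subseteq> S" "independent C" "S \<subseteq> span C"
    using maximal_independent_subset[of S] by blast
  have "span C = UNIV"
    using C assms span_mono[of S "span C"] by (auto simp: span_span)
  then have "finite_dimensional_vector_space (scaleR :: real \<Rightarrow> 'a \<Rightarrow> 'a) C"
  proof unfold_locales
    show "finite C" using C(1) assms(1) finite_subset by blast
    show "\<not> module.dependent scaleR C" using C(2) by (simp add: dependent_raw_def)
    show "module.span scaleR C = UNIV" using \<open>span C = UNIV\<close> by (simp add: span_raw_def)
  qed
  then show thesis ..
qed

lemma dim_strict_mono:
  fixes A B S :: "'a::real_vector set"
  assumes "finite S" "span S = UNIV" and "span A \<subset> span B"
  shows "dim A < dim B"
proof -
  obtain C where "finite_dimensional_vector_space (scaleR :: real \<Rightarrow> 'a \<Rightarrow> 'a) C"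
    by (rule finite_dimensional_real_vector_space[OF assms(1,2)])
  then interpret fd: finite_dimensional_vector_space "scaleR :: real \<Rightarrow> 'a \<Rightarrow> 'a" C
    rewrites "module.span scaleR = span" and "vector_space.dim scaleR = dim"
    by (simp_all add: span_raw_def dim_raw_def)
  show ?thesis using fd.dim_psubset assms(3) .
qed

lemma span_eq_UNIV_if_card_eq_dim:
  fixes B :: "'a::real_vector set"
  assumes "independent B" and "card B = dim (UNIV :: 'a set)" and "0 < dim (UNIV :: 'a set)"
  shows "span B = UNIV"
proof -
  obtain C :: "'a set" where C: "C \<subseteq> UNIV" "independent C" "UNIV \<subseteq> span C" "card C = dim (UNIV :: 'a set)"
    by (rule basis_exists)
  have "finite B" "finite C"
    using assms(2,3) C(4) by (simp_all add: card_ge_0_finite)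
  obtain C' where "finite_dimensional_vector_space (scaleR :: real \<Rightarrow> 'a \<Rightarrow> 'a) C'"
    using finite_dimensional_real_vector_space[OF \<open>finite C\<close>] C(3) by auto
  then interpret fd: finite_dimensional_vector_space "scaleR :: real \<Rightarrow> 'a \<Rightarrow> 'a" C'
    rewrites "module.span scaleR = span" and "vector_space.dim scaleR = dim"
      and "module.dependent scaleR = dependent"
    by (simp_all add: span_raw_def dim_raw_def dependent_raw_def)
  have "UNIV \<subseteq> span B"
    using fd.card_eq_dim[of B UNIV] assms(1,2) \<open>finite B\<close> by blast
  then show ?thesis by blast
qed

lemma independent_if_dual_family:
  fixes B :: "'i \<Rightarrow> 'a::real_vector" and d :: "'i \<Rightarrow> 'a \<Rightarrow> real"
  assumes lin: "\<forall>i\<in>S. linear (d i)"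
    and kron: "\<forall>i\<in>S. \<forall>j\<in>S. d i (B j) = (if i = j then 1 else 0)"
  shows "inj_on B S" and "independent (B ` S)"
proof -
  show "inj_on B S"
  proof (rule inj_onI)
    fix i j assume "i \<in> S" "j \<in> S" "B i = B j"
    then have "d i (B i) = d i (B j)" by simp
    with kron \<open>i \<in> S\<close> \<open>j \<in> S\<close> show "i = j" by (auto split: if_splits)
  qed
  show "independent (B ` S)"
  proof
    assume "dependent (B ` S)"
    then obtain i where i: "i \<in> S" "B i \<in> span (B ` S - {B i})"
      unfolding dependent_def by auto
    have "d i (B i) = 0"
    proof (rule linear_eq_on[OF _ linear_zero i(2)])
      show "linear (d i)" using lin i(1) by blast
      show "d i b = 0" if "b \<in> B ` S - {B i}" for b
        using that kron i(1) by auto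
    qed
    with kron i(1) show False by simp
  qed
qed

lemma dual_family_expansion:
  fixes B :: "'i \<Rightarrow> 'a::real_vector" and d :: "'i \<Rightarrow> 'a \<Rightarrow> real"
  assumes "finite S" and lin: "\<forall>i\<in>S. linear (d i)"
    and kron: "\<forall>i\<in>S. \<forall>j\<in>S. d i (B j) = (if i = j then 1 else 0)"
    and "x \<in> span (B ` S)"
  shows "x = (\<Sum>i\<in>S. d i x *\<^sub>R B i)"
proof -
  have "id x = (\<Sum>i\<in>S. d i x *\<^sub>R B i)"
  proof (rule linear_eq_on[OF linear_id _ assms(4)])
    show "linear (\<lambda>x. \<Sum>i\<in>S. d i x *\<^sub>R B i)"
      using lin by (intro linear_compose_sum ballI linearI) (simp_all add: linear_add linear_scale scaleR_add_left)
    fix y assume "y \<in> B ` S"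
    then obtain j where j: "j \<in> S" "y = B j" by blast
    have "(\<Sum>i\<in>S. d i (B j) *\<^sub>R B i) = (\<Sum>i\<in>S. if i = j then B i else 0)"
      using kron j(1) by (intro sum.cong) auto
    then show "id y = (\<Sum>i\<in>S. d i y *\<^sub>R B i)" using j assms(1) by simp
  qed
  then show ?thesis by simp
qed

lemma coordinates_of_two_vectors:
  fixes u w :: "'a::real_vector"
  assumes "independent {u, w}" "u \<noteq> w" "span {u, w} = UNIV"
  obtains g h :: "'a \<Rightarrow> real"
  where "linear g" "linear h" "g u = 1" "g w = 0" "h u = 0" "h w = 1"
    and "\<And>s. g s *\<^sub>R u + h s *\<^sub>R w = s"
proof -
  obtain g :: "'a \<Rightarrow> real" where g: "linear g" "g u = 1" "g w = 0"
    using linear_independent_extend[OF assms(1), of "\<lambda>x. if x = u then 1 else 0"] assms(2) by auto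
  obtain h :: "'a \<Rightarrow> real" where h: "linear h" "h u = 0" "h w = 1"
    using linear_independent_extend[OF assms(1), of "\<lambda>x. if x = u then 0 else 1"] assms(2) by auto
  have "g s *\<^sub>R u + h s *\<^sub>R w = id s" for s
  proof (rule linear_eq_on[of _ _ s "{u, w}"])
    show "linear (\<lambda>s. g s *\<^sub>R u + h s *\<^sub>R w)"
      using g(1) h(1) by (intro linearI) (simp_all add: linear_add linear_scale algebra_simps)
  qed (use assms(3) g h linear_id in \<open>auto simp: id_def\<close>)
  with g h show thesis using that by simp
qed

lemma complex_structure_not_in_span:
  assumes "complex_structure j" and "t \<noteq> 0"
  shows "j t \<notin> span {t}"
proof
  assume "j t \<in> span {t}"
  then obtain c where c: "j t = c *\<^sub>R t" by (auto simp: span_singleton)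
  have "- t = j (j t)" using assms(1) by (simp add: complex_structure_def)
  also have "\<dots> = (c * c) *\<^sub>R t"
    using assms(1) c by (simp add: complex_structure_def linear_scale)
  finally have "(c * c) *\<^sub>R t + t = 0" by (metis add.left_inverse)
  then have "(c * c + 1) *\<^sub>R t = 0" by (simp add: scaleR_add_left)
  moreover have "c * c + 1 \<noteq> 0" using zero_le_square[of c] by linarith
  ultimately show False using assms(2) by simp
qed

lemma exists_transversal_frame:
  fixes \<sigma> :: "'w::real_vector \<Rightarrow> 't::real_vector" and I :: "'w \<Rightarrow> 'w" and j :: "'t \<Rightarrow> 't"
  assumes "complex_structure j" "linear \<sigma>" "\<And>x. \<sigma> (I x) = j (\<sigma> x)" "surj \<sigma>"
    and "dim (UNIV :: 't set) = 2"
  obtains e \<epsilon>1 \<epsilon>2 where "\<sigma> e \<noteq> 0" "span {\<sigma> e, \<sigma> (I e)} = UNIV" "linear \<epsilon>1" "linear \<epsilon>2"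
    "\<epsilon>1 e = 1" "\<epsilon>1 (I e) = 0" "\<epsilon>2 e = 0" "\<epsilon>2 (I e) = 1"
    "\<And>v. \<sigma> v = 0 \<Longrightarrow> \<epsilon>1 v = 0" "\<And>v. \<sigma> v = 0 \<Longrightarrow> \<epsilon>2 v = 0"
    "\<And>x. \<sigma> (x - \<epsilon>1 x *\<^sub>R e - \<epsilon>2 x *\<^sub>R I e) = 0"
proof -
  obtain t :: 't where t: "t \<noteq> 0"
  proof -
    have "\<not> UNIV \<subseteq> span ({} :: 't set)"
      using dim_le_card[of "UNIV :: 't set" "{}"] assms(5) by auto
    then show thesis using that by auto
  qed
  obtain e where e: "\<sigma> e = t" using assms(4) by (metis surjD)
  have "t \<notin> span {}" using t by simp
  then have "independent {t}" using independent_insertI[of t "{}"] by simp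
  moreover have jt: "j t \<notin> span {t}" by (rule complex_structure_not_in_span[OF assms(1) t])
  ultimately have ind: "independent {t, j t}"
    using independent_insertI[of "j t" "{t}"] by (simp add: insert_commute)
  have ne: "t \<noteq> j t" using jt span_base[of t "{t}"] by auto
  have "span {t, j t} = UNIV"
    by (rule span_eq_UNIV_if_card_eq_dim) (use ind ne assms(5) in auto)
  then obtain g h :: "'t \<Rightarrow> real" where gh: "linear g" "linear h" "g t = 1" "g (j t) = 0"
    "h t = 0" "h (j t) = 1" "\<And>s. g s *\<^sub>R t + h s *\<^sub>R j t = s"
    using coordinates_of_two_vectors[OF ind ne] by blast
  have \<sigma>_Ie: "\<sigma> (I e) = j t" using assms(3) e by simp
  show thesis
  proof (rule that[of e "\<lambda>x. g (\<sigma> x)" "\<lambda>x. h (\<sigma> x)"])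
    show "linear (\<lambda>x. g (\<sigma> x))" "linear (\<lambda>x. h (\<sigma> x))"
      using linear_compose[OF assms(2)] gh(1,2) by (simp_all add: o_def)
    show "\<sigma> (x - g (\<sigma> x) *\<^sub>R e - h (\<sigma> x) *\<^sub>R I e) = 0" for x
    proof -
      have "\<sigma> (x - g (\<sigma> x) *\<^sub>R e - h (\<sigma> x) *\<^sub>R I e) = \<sigma> x - (g (\<sigma> x) *\<^sub>R t + h (\<sigma> x) *\<^sub>R j t)"
        using assms(2) e \<sigma>_Ie by (simp add: linear_diff linear_scale)
      then show ?thesis using gh(7) by simp
    qed
  qed (use e \<sigma>_Ie t gh \<open>span {t, j t} = UNIV\<close> linear_0[OF gh(1)] linear_0[OF gh(2)] in auto)
qed

section \<open>Alternating forms compatible with a complex structure\<close>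

locale compatible_form =
  fixes I :: "'w::real_vector \<Rightarrow> 'w" and \<omega> :: "'w \<Rightarrow> 'w \<Rightarrow> real" and V :: "'w set"
  assumes linear_I: "linear I" and I_I [simp]: "\<And>x. I (I x) = - x"
    and linear_left: "\<And>y. linear (\<lambda>x. \<omega> x y)" and linear_right: "\<And>x. linear (\<omega> x)"
    and alternating [simp]: "\<And>x. \<omega> x x = 0"
    and subspace_V: "subspace V" and I_V: "\<And>v. v \<in> V \<Longrightarrow> I v \<in> V"
    and I_symmetric: "\<And>x y. x \<in> V \<Longrightarrow> y \<in> V \<Longrightarrow> \<omega> (I x) y = \<omega> x (I y)"
begin

lemmas form_simps [simp] =
  linear_add[OF linear_left] linear_diff[OF linear_left] linear_neg[OF linear_left]
  linear_scale[OF linear_left] linear_0[OF linear_left]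
  linear_add[OF linear_right] linear_diff[OF linear_right] linear_neg[OF linear_right]
  linear_scale[OF linear_right] linear_0[OF linear_right]
  linear_add[OF linear_I] linear_diff[OF linear_I] linear_neg[OF linear_I]
  linear_scale[OF linear_I] linear_0[OF linear_I]

lemma antisymmetric: "\<omega> x y = - \<omega> y x"
proof -
  have "\<omega> (x + y) (x + y) = \<omega> x x + \<omega> x y + \<omega> y x + \<omega> y y"
    by (simp del: alternating)
  then show ?thesis by simp
qed

lemma I_self: "x \<in> V \<Longrightarrow> \<omega> x (I x) = 0"
  using I_symmetric[of x x] antisymmetric[of "I x" x] by simp

definition nondegenerate_on :: "'w set \<Rightarrow> bool" where
  "nondegenerate_on U \<longleftrightarrow> (\<forall>u\<in>U. (\<forall>w\<in>U. \<omega> u w = 0) \<longrightarrow> u = 0)"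

definition orth :: "'w set \<Rightarrow> 'w set \<Rightarrow> 'w set" where
  "orth U X = {u \<in> U. \<forall>x\<in>X. \<omega> x u = 0}"

lemma orth_pairing: "y \<in> orth U X \<Longrightarrow> x \<in> X \<Longrightarrow> \<omega> x y = 0 \<and> \<omega> y x = 0"
  using antisymmetric[of y x] by (simp add: orth_def)

lemma subspace_orth: "subspace U \<Longrightarrow> subspace (orth U X)"
  by (auto simp: subspace_def orth_def)

lemma orth_vanishes_on_span: "u \<in> orth U X \<Longrightarrow> s \<in> span X \<Longrightarrow> \<omega> s u = 0"
  by (rule linear_eq_on[OF linear_left linear_zero]) (auto simp: orth_def)

lemma orth_I_closed:
  assumes "U \<subseteq> V" "\<And>u. u \<in> U \<Longrightarrow> I u \<in> U" "X \<subseteq> V" "I ` X \<subseteq> span X"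
    and "u \<in> orth U X"
  shows "I u \<in> orth U X"
proof -
  have "\<omega> x (I u) = 0" if "x \<in> X" for x
  proof -
    have "x \<in> V" "u \<in> V" using that assms(1,3,5) by (auto simp: orth_def)
    then have "\<omega> x (I u) = \<omega> (I x) u" by (simp add: I_symmetric)
    also have "\<dots> = 0"
      using orth_vanishes_on_span[OF assms(5)] assms(4) that by blast
    finally show ?thesis .
  qed
  then show ?thesis using assms(2,5) by (simp add: orth_def)
qed

lemma nondegenerate_on_orth:
  assumes "nondegenerate_on U" and decomp: "\<And>w. w \<in> U \<Longrightarrow> \<exists>s\<in>span X. w - s \<in> orth U X"
  shows "nondegenerate_on (orth U X)"
  unfolding nondegenerate_on_def
proof (intro ballI impI)
  fix u assume u: "u \<in> orth U X" and null: "\<forall>w\<in>orth U X. \<omega> u w = 0"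
  have "\<omega> u w = 0" if w: "w \<in> U" for w
  proof -
    obtain s where s: "s \<in> span X" "w - s \<in> orth U X" using decomp[OF w] by blast
    have "\<omega> u w = \<omega> u (w - s) + \<omega> u s" by simp
    also have "\<omega> u (w - s) = 0" using null s(2) by blast
    also have "\<omega> u s = 0" using antisymmetric[of u s] orth_vanishes_on_span[OF u s(1)] by simp
    finally show ?thesis by simp
  qed
  then show "u = 0" using assms(1) u by (auto simp: nondegenerate_on_def orth_def)
qed

lemma span_Un_orth:
  assumes "subspace U" "X \<subseteq> U" "span Y = orth U X"
    and decomp: "\<And>w. w \<in> U \<Longrightarrow> \<exists>s\<in>span X. w - s \<in> orth U X"
  shows "span (X \<union> Y) = U"
proof
  have "Y \<subseteq> U" using assms(3) span_superset[of Y] by (auto simp: orth_def)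
  then show "span (X \<union> Y) \<subseteq> U" using assms(1,2) by (intro span_minimal) auto
  show "U \<subseteq> span (X \<union> Y)"
  proof
    fix w assume "w \<in> U"
    then obtain s where "s \<in> span X" "w - s \<in> span Y" using decomp assms(3) by blast
    then have "s + (w - s) \<in> span (X \<union> Y)"
      by (intro span_add) (auto intro: span_mono[THEN subsetD])
    then show "w \<in> span (X \<union> Y)" by simp
  qed
qed

lemma exists_normal_partner:
  assumes "subspace U" "U \<subseteq> V" "\<And>u. u \<in> U \<Longrightarrow> I u \<in> U" "nondegenerate_on U"
    and "a \<in> U" "a \<noteq> 0"
  obtains b where "b \<in> U" "\<omega> b a = 0" "\<omega> b (I a) = -1"
proof -
  obtain w where w: "w \<in> U" "\<omega> a w \<noteq> 0"
    using assms(4-6) unfolding nondegenerate_on_def by blast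
  have in_V: "a \<in> V" "w \<in> V" using assms(2,5) w(1) by auto
  define p q where "p = \<omega> w a" and "q = \<omega> w (I a)"
  define r where "r = p\<^sup>2 + q\<^sup>2"
  have "p \<noteq> 0" using w(2) antisymmetric[of a w] by (simp add: p_def)
  then have r: "r \<noteq> 0" by (simp add: r_def)
  \<comment> \<open>Since \<open>\<omega> (I w) a = q\<close> and \<open>\<omega> (I w) (I a) = - p\<close>, this solves the two linear conditions on b.\<close>
  define b where "b = (- q / r) *\<^sub>R w + (p / r) *\<^sub>R I w"
  have "b \<in> U"
    unfolding b_def using assms(1,3) w(1) by (intro subspace_add subspace_scale) auto
  moreover have "\<omega> b a = (- q / r) * p + (p / r) * q"
    unfolding b_def using in_V by (simp add: I_symmetric p_def q_def)
  then have "\<omega> b a = 0" by (simp add: field_simps)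
  moreover have "\<omega> b (I a) = (- q / r) * q + (p / r) * (- p)"
    unfolding b_def using in_V by (simp add: I_symmetric I_V p_def q_def)
  then have "\<omega> b (I a) = - r / r" by (simp add: r_def power2_eq_square diff_divide_distrib)
  then have "\<omega> b (I a) = -1" using r by simp
  ultimately show thesis using that by blast
qed

lemma normal_pair_values:
  assumes "a \<in> V" "b \<in> V" "\<omega> b a = 0" "\<omega> b (I a) = -1"
  shows "\<omega> a b = 0" "\<omega> a (I a) = 0" "\<omega> b (I b) = 0" "\<omega> a (I b) = 1"
  using assms antisymmetric[of a b] antisymmetric[of a "I b"] I_symmetric[of b a] I_self by auto

lemma normal_pair_decomposition:
  assumes "subspace U" "U \<subseteq> V" "\<And>u. u \<in> U \<Longrightarrow> I u \<in> U"
    and "a \<in> U" "b \<in> U" "\<omega> b a = 0" "\<omega> b (I a) = -1" and "u \<in> U"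
  shows "\<exists>s\<in>span {a, I a, b, - I b}. u - s \<in> orth U {a, I a, b, - I b}"
proof
  let ?s = "- \<omega> (I b) u *\<^sub>R a - \<omega> b u *\<^sub>R I a + \<omega> (I a) u *\<^sub>R b - \<omega> a u *\<^sub>R (- I b)"
  show "?s \<in> span {a, I a, b, - I b}"
    by (intro span_add span_diff span_scale span_base) auto
  have in_V: "a \<in> V" "b \<in> V" "u \<in> V" using assms(2,4,5,8) by auto
  have "?s \<in> U" using assms(1,3-5) by (intro subspace_add subspace_diff subspace_scale subspace_neg) auto
  then have "u - ?s \<in> U" by (rule subspace_diff[OF assms(1,8)])
  moreover have "\<omega> a (u - ?s) = 0" "\<omega> (I a) (u - ?s) = 0" "\<omega> b (u - ?s) = 0" "\<omega> (- I b) (u - ?s) = 0"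
    using in_V normal_pair_values[OF in_V(1,2) assms(6,7)] assms(6,7)
    by (simp_all add: I_symmetric I_V)
  ultimately show "u - ?s \<in> orth U {a, I a, b, - I b}" unfolding orth_def by blast
qed

lemma dim_orth_normal_pair_less:
  fixes S :: "'w set"
  assumes "finite S" "span S = UNIV" and "subspace U" "U \<subseteq> V"
    and "a \<in> U" "b \<in> V" "\<omega> b (I a) = -1"
  shows "dim (orth U {a, I a, b, - I b}) < dim U"
proof (rule dim_strict_mono[OF assms(1,2)])
  have "\<omega> (- I b) a = 1" using assms(4-7) I_symmetric[of b a] by auto
  then have "a \<notin> orth U {a, I a, b, - I b}" by (simp add: orth_def)
  moreover have "orth U {a, I a, b, - I b} \<subseteq> U" by (auto simp: orth_def)
  moreover have "span (orth U {a, I a, b, - I b}) = orth U {a, I a, b, - I b}"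
    by (simp add: span_eq_iff subspace_orth assms(3))
  moreover have "span U = U" using assms(3) by (simp add: span_eq_iff)
  ultimately show "span (orth U {a, I a, b, - I b}) \<subset> span U"
    using assms(5) by blast
qed

text \<open>Only six pairings are recorded; the others follow by antisymmetry and \<open>I\<close>-symmetry
  (\<open>normal_family_values\<close>).\<close>

definition normal_family :: "nat \<Rightarrow> (nat \<Rightarrow> 'w) \<Rightarrow> (nat \<Rightarrow> 'w) \<Rightarrow> bool" where
  "normal_family n a b \<longleftrightarrow> (\<forall>k\<in>{1..n}. \<forall>l\<in>{1..n}.
     \<omega> (a k) (a l) = 0 \<and> \<omega> (a k) (I (a l)) = 0 \<and> \<omega> (b k) (b l) = 0 \<and> \<omega> (b k) (I (b l)) = 0 \<and>
     \<omega> (b k) (a l) = 0 \<and> \<omega> (b k) (I (a l)) = (if k = l then -1 else 0))"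

definition normal_vectors :: "nat \<Rightarrow> (nat \<Rightarrow> 'w) \<Rightarrow> (nat \<Rightarrow> 'w) \<Rightarrow> 'w set" where
  "normal_vectors n a b = (\<Union>k\<in>{1..n}. {a k, I (a k), b k, - I (b k)})"

lemma normal_vectors_mem [simp]:
  assumes "k \<in> {1..n}"
  shows "a k \<in> normal_vectors n a b" "I (a k) \<in> normal_vectors n a b"
    and "b k \<in> normal_vectors n a b" "- I (b k) \<in> normal_vectors n a b"
  using assms by (auto simp: normal_vectors_def)

lemma normal_vectors_Suc:
  "normal_vectors (Suc n) (a(Suc n := a0)) (b(Suc n := b0)) =
     {a0, I a0, b0, - I b0} \<union> normal_vectors n a b"
  by (auto simp: normal_vectors_def atLeastAtMostSuc_conv)

lemma normal_family_values:
  assumes "normal_family n a b" "k \<in> {1..n}" "l \<in> {1..n}"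
    and "a k \<in> V" "b l \<in> V"
  shows "\<omega> (a k) (a l) = 0" "\<omega> (a k) (I (a l)) = 0" "\<omega> (b k) (b l) = 0" "\<omega> (b k) (I (b l)) = 0"
    "\<omega> (b k) (a l) = 0" "\<omega> (b k) (I (a l)) = (if k = l then -1 else 0)"
    "\<omega> (a k) (b l) = 0" "\<omega> (a k) (I (b l)) = (if k = l then 1 else 0)"
proof -
  have "\<omega> (b l) (a k) = 0" "\<omega> (b l) (I (a k)) = (if l = k then -1 else 0)"
    using assms(1-3) by (auto simp: normal_family_def)
  moreover have "\<omega> (I (b l)) (a k) = \<omega> (b l) (I (a k))" using assms(4,5) by (simp add: I_symmetric)
  ultimately show "\<omega> (a k) (b l) = 0" "\<omega> (a k) (I (b l)) = (if k = l then 1 else 0)"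
    using antisymmetric[of "a k" "b l"] antisymmetric[of "a k" "I (b l)"] by auto
qed (use assms(1-3) in \<open>auto simp: normal_family_def\<close>)

lemma normal_family_extend:
  assumes "normal_family n a b" "normal_vectors n a b \<subseteq> orth U {a0, I a0, b0, - I b0}"
    and "a0 \<in> V" "b0 \<in> V" "\<omega> b0 a0 = 0" "\<omega> b0 (I a0) = -1"
  shows "normal_family (Suc n) (a(Suc n := a0)) (b(Suc n := b0))"
  unfolding normal_family_def
proof (intro ballI)
  have orth_old: "\<forall>x\<in>{a0, I a0, b0, - I b0}. \<omega> x y = 0 \<and> \<omega> y x = 0"
    if "y \<in> normal_vectors n a b" for y
    using orth_pairing assms(2) that by blast
  fix k l assume k: "k \<in> {1..Suc n}" and l: "l \<in> {1..Suc n}"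
  consider "k = Suc n" "l = Suc n" | "k = Suc n" "l \<in> {1..n}" | "k \<in> {1..n}" "l = Suc n"
    | "k \<in> {1..n}" "l \<in> {1..n}"
    using k l by (auto simp: atLeastAtMostSuc_conv)
  then show "\<omega> ((a(Suc n := a0)) k) ((a(Suc n := a0)) l) = 0 \<and>
    \<omega> ((a(Suc n := a0)) k) (I ((a(Suc n := a0)) l)) = 0 \<and>
    \<omega> ((b(Suc n := b0)) k) ((b(Suc n := b0)) l) = 0 \<and>
    \<omega> ((b(Suc n := b0)) k) (I ((b(Suc n := b0)) l)) = 0 \<and>
    \<omega> ((b(Suc n := b0)) k) ((a(Suc n := a0)) l) = 0 \<and>
    \<omega> ((b(Suc n := b0)) k) (I ((a(Suc n := a0)) l)) = (if k = l then -1 else 0)"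
  proof cases
    case 1
    then show ?thesis using assms(3-6) normal_pair_values[OF assms(3-6)] I_self by simp
  next
    case 2
    then have "l \<noteq> Suc n" by auto
    with 2 show ?thesis
      using orth_old[OF normal_vectors_mem(1)[OF 2(2)]] orth_old[OF normal_vectors_mem(2)[OF 2(2)]]
        orth_old[OF normal_vectors_mem(3)[OF 2(2)]] orth_old[OF normal_vectors_mem(4)[OF 2(2)]]
      by simp
  next
    case 3
    then have "k \<noteq> Suc n" by auto
    with 3 show ?thesis
      using orth_old[OF normal_vectors_mem(1)[OF 3(1)]] orth_old[OF normal_vectors_mem(3)[OF 3(1)]]
      by simp
  next
    case 4
    then show ?thesis using assms(1) by (simp add: normal_family_def)
  qed
qed

lemma exists_normal_family:
  fixes S :: "'w set"
  assumes fin: "finite S" "span S = UNIV"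
    and "subspace U" "U \<subseteq> V" "\<And>u. u \<in> U \<Longrightarrow> I u \<in> U" "nondegenerate_on U"
  shows "\<exists>n a b. normal_family n a b \<and> span (normal_vectors n a b) = U"
  using assms(3-6)
proof (induction "dim U" arbitrary: U rule: less_induct)
  case less
  note U = less.prems
  show ?case
  proof (cases "U = {0}")
    case True
    then show ?thesis by (intro exI[of _ 0]) (simp add: normal_family_def normal_vectors_def)
  next
    case False
    then obtain a where a: "a \<in> U" "a \<noteq> 0" using subspace_0[OF U(1)] by blast
    then obtain b where b: "b \<in> U" "\<omega> b a = 0" "\<omega> b (I a) = -1"
      using exists_normal_partner U by blast
    define X where "X = {a, I a, b, - I b}"
    have in_V: "a \<in> V" "b \<in> V" using U(2) a(1) b(1) by auto
    have X: "X \<subseteq> U" "X \<subseteq> V" "I ` X \<subseteq> span X"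
      using a(1) b(1) U(2,3) subspace_neg[OF U(1)] span_neg[OF span_base, of "- I b" X]
        span_neg[OF span_base, of a X]
      by (auto simp: X_def intro: span_base)
    have decomp: "\<exists>s\<in>span X. w - s \<in> orth U X" if "w \<in> U" for w
      unfolding X_def using normal_pair_decomposition[OF U(1-3) a(1) b that] .
    have "dim (orth U X) < dim U"
      unfolding X_def by (rule dim_orth_normal_pair_less[OF fin U(1,2) a(1) in_V(2) b(3)])
    moreover have "orth U X \<subseteq> V" using U(2) by (auto simp: orth_def)
    ultimately obtain n a' b' where IH: "normal_family n a' b'" "span (normal_vectors n a' b') = orth U X"
      using less.hyps subspace_orth[OF U(1)] orth_I_closed[OF U(2,3) X(2,3)] nondegenerate_on_orth[OF U(4) decomp]
      by meson
    have "normal_family (Suc n) (a'(Suc n := a)) (b'(Suc n := b))"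
      using IH span_superset[of "normal_vectors n a' b'"] in_V b(2,3)
      by (intro normal_family_extend[of n a' b' U]) (auto simp: X_def)
    moreover have "span (normal_vectors (Suc n) (a'(Suc n := a)) (b'(Suc n := b))) = U"
      unfolding normal_vectors_Suc X_def[symmetric] using U(1) X(1) IH(2) decomp
      by (rule span_Un_orth)
    ultimately show ?thesis by blast
  qed
qed

end

section \<open>Alternating trilinear forms\<close>

locale alternating_trilinear =
  fixes F :: "'w::real_vector \<Rightarrow> 'w \<Rightarrow> 'w \<Rightarrow> real"
  assumes trilinear: "trilinear F" and alternating: "alternating3 F"
begin

lemma linear_arg1: "linear (\<lambda>x. F x y z)"
  and linear_arg2: "linear (\<lambda>y. F x y z)"
  and linear_arg3: "linear (F x y)"
  using trilinear by (auto simp: trilinear_def)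

lemmas trilinear_simps [simp] =
  linear_add[OF linear_arg1] linear_diff[OF linear_arg1] linear_neg[OF linear_arg1]
  linear_scale[OF linear_arg1] linear_0[OF linear_arg1]
  linear_add[OF linear_arg2] linear_diff[OF linear_arg2] linear_neg[OF linear_arg2]
  linear_scale[OF linear_arg2] linear_0[OF linear_arg2]
  linear_add[OF linear_arg3] linear_diff[OF linear_arg3] linear_neg[OF linear_arg3]
  linear_scale[OF linear_arg3] linear_0[OF linear_arg3]

lemma alternating_simps [simp]: "F x x z = 0" "F x y y = 0" "F x y x = 0"
  using alternating by (auto simp: alternating3_def)

lemma swap12: "F x y z = - F y x z"
proof -
  have "F (x + y) (x + y) z = F x x z + F x y z + F y x z + F y y z"
    by (simp del: alternating_simps)
  then show ?thesis by simp
qed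

lemma swap23: "F x y z = - F x z y"
proof -
  have "F x (y + z) (y + z) = F x y y + F x y z + F x z y + F x z z"
    by (simp del: alternating_simps)
  then show ?thesis by simp
qed

lemma swap13: "F x y z = - F z y x"
proof -
  have "F (x + z) y (x + z) = F x y x + F x y z + F z y x + F z y z"
    by (simp del: alternating_simps)
  then show ?thesis by simp
qed

lemma expand_along_plane:
  assumes "F x y z = 0"
  shows "F (x1 *\<^sub>R e1 + x2 *\<^sub>R e2 + x) (y1 *\<^sub>R e1 + y2 *\<^sub>R e2 + y) (z1 *\<^sub>R e1 + z2 *\<^sub>R e2 + z) =
    x1 * F e1 y z - y1 * F e1 x z + z1 * F e1 x y + x2 * F e2 y z - y2 * F e2 x z + z2 * F e2 x y
    + (x1 * y2 - x2 * y1) * F e1 e2 z - (x1 * z2 - x2 * z1) * F e1 e2 y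
    + (y1 * z2 - y2 * z1) * F e1 e2 x"
proof -
  have "F x e1 z = - F e1 x z" "F x e2 z = - F e2 x z" "F e2 e1 z = - F e1 e2 z"
    by (rule swap12)+
  moreover have "F e1 y e2 = - F e1 e2 y" by (rule swap23)
  moreover have "F x y e1 = F e1 x y" "F x y e2 = F e2 x y" "F e2 y e1 = F e1 e2 y"
    "F x e1 e2 = F e1 e2 x"
    using swap13[of x y e1] swap13[of x y e2] swap13[of e2 y e1] swap12[of x e1 e2]
      swap23[of e1 y x] swap23[of e2 y x] swap23[of e1 y e2] swap23[of e1 x e2]
    by simp_all
  moreover have "F x e2 e1 = - F e1 e2 x" by (rule swap13)
  ultimately show ?thesis using assms by (simp add: algebra_simps)
qed

lemma compatible_form_slice:
  assumes "linear I" "\<And>x. I (I x) = - x" "subspace V" "\<And>v. v \<in> V \<Longrightarrow> I v \<in> V"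
    and I_slice: "\<And>u v. u \<in> V \<Longrightarrow> v \<in> V \<Longrightarrow> F (I \<xi>) u v = - F \<xi> u (I v)"
  shows "compatible_form I (F \<xi>) V"
proof (rule compatible_form.intro)
  show "F \<xi> (I x) y = F \<xi> x (I y)" if "x \<in> V" "y \<in> V" for x y
    using I_slice[OF that] I_slice[OF that(2,1)] swap23[of "I \<xi>" y x] swap23[of \<xi> y "I x"]
    by simp
qed (use assms linear_arg2 linear_arg3 in auto)

end

section \<open>The adapted basis\<close>

lemma bidx_set_mem [simp]:
  "Ie1 \<in> bidx_set n" "Ie2 \<in> bidx_set n"
  "Ia1 k \<in> bidx_set n \<longleftrightarrow> k \<in> {1..n}" "Ia2 k \<in> bidx_set n \<longleftrightarrow> k \<in> {1..n}"
  "Ib1 k \<in> bidx_set n \<longleftrightarrow> k \<in> {1..n}" "Ib2 k \<in> bidx_set n \<longleftrightarrow> k \<in> {1..n}"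
  by (auto simp: bidx_set_def)

lemma finite_bidx_set [simp]: "finite (bidx_set n)"
  by (simp add: bidx_set_def)

lemma bidx_set_minus_frame:
  "bidx_set n - {Ie1, Ie2} = Ia1 ` {1..n} \<union> Ia2 ` {1..n} \<union> Ib1 ` {1..n} \<union> Ib2 ` {1..n}"
  by (auto simp: bidx_set_def)

lemma sum_bidx_set_minus_frame:
  "(\<Sum>i\<in>bidx_set n - {Ie1, Ie2}. f i) = (\<Sum>k=1..n. f (Ia1 k) + f (Ia2 k) + f (Ib1 k) + f (Ib2 k))"
proof -
  have "(\<Sum>i\<in>bidx_set n - {Ie1, Ie2}. f i) =
      sum f (Ia1 ` {1..n}) + sum f (Ia2 ` {1..n}) + sum f (Ib1 ` {1..n}) + sum f (Ib2 ` {1..n})"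
    unfolding bidx_set_minus_frame by (subst sum.union_disjoint, auto)+
  also have "\<dots> = (\<Sum>k=1..n. f (Ia1 k) + f (Ia2 k) + f (Ib1 k) + f (Ib2 k))"
    by (simp add: sum.reindex inj_on_def sum.distrib)
  finally show ?thesis .
qed
lemma card_bidx_set_minus_frame: "card (bidx_set n - {Ie1, Ie2}) = 4 * n"
proof -
  have "card (bidx_set n - {Ie1, Ie2}) = (\<Sum>i\<in>bidx_set n - {Ie1, Ie2}. 1)" by (rule card_eq_sum)
  also have "\<dots> = 4 * n" by (simp only: sum_bidx_set_minus_frame) simp
  finally show ?thesis .
qed

definition wedge2 :: "('a \<Rightarrow> real) \<Rightarrow> ('a \<Rightarrow> real) \<Rightarrow> 'a \<Rightarrow> 'a \<Rightarrow> real" where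
  "wedge2 \<alpha> \<beta> y z = \<alpha> y * \<beta> z - \<alpha> z * \<beta> y"

lemma wedge3_eq_wedge2:
  "wedge3 \<alpha> \<beta> \<gamma> x y z = \<gamma> z * wedge2 \<alpha> \<beta> x y - \<gamma> y * wedge2 \<alpha> \<beta> x z + \<gamma> x * wedge2 \<alpha> \<beta> y z"
  by (simp add: wedge3_def wedge2_def algebra_simps)

locale normal_frame = alternating_trilinear \<Omega> + compatible_form I "\<Omega> e" V
  for \<Omega> :: "'w::real_vector \<Rightarrow> 'w \<Rightarrow> 'w \<Rightarrow> real" and I e V +
  fixes \<epsilon>1 \<epsilon>2 :: "'w \<Rightarrow> real" and n :: nat and a b :: "nat \<Rightarrow> 'w"
  assumes vanishes_on_V: "\<And>u v w. u \<in> V \<Longrightarrow> v \<in> V \<Longrightarrow> w \<in> V \<Longrightarrow> \<Omega> u v w = 0"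
    and Omega_I_e: "\<And>u v. u \<in> V \<Longrightarrow> v \<in> V \<Longrightarrow> \<Omega> (I e) u v = - \<Omega> e u (I v)"
    and linear_\<epsilon>1: "linear \<epsilon>1" and linear_\<epsilon>2: "linear \<epsilon>2"
    and \<epsilon>_frame [simp]: "\<epsilon>1 e = 1" "\<epsilon>1 (I e) = 0" "\<epsilon>2 e = 0" "\<epsilon>2 (I e) = 1"
    and \<epsilon>_V [simp]: "\<And>v. v \<in> V \<Longrightarrow> \<epsilon>1 v = 0" "\<And>v. v \<in> V \<Longrightarrow> \<epsilon>2 v = 0"
    and complement: "\<And>x. x - \<epsilon>1 x *\<^sub>R e - \<epsilon>2 x *\<^sub>R I e \<in> V"
    and normal: "normal_family n a b" and span_normal: "span (normal_vectors n a b) = V"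
begin

lemma mem_V_iff [simp]: "I v \<in> V \<longleftrightarrow> v \<in> V" "- v \<in> V \<longleftrightarrow> v \<in> V"
proof -
  show "I v \<in> V \<longleftrightarrow> v \<in> V" using I_V[of v] I_V[of "I v"] subspace_neg[OF subspace_V, of "I (I v)"] by auto
  show "- v \<in> V \<longleftrightarrow> v \<in> V" using subspace_neg[OF subspace_V, of v] subspace_neg[OF subspace_V, of "- v"] by auto
qed

lemma normal_in_V [simp]:
  assumes "k \<in> {1..n}" shows "a k \<in> V" "b k \<in> V"
  using span_base[OF normal_vectors_mem(1)[OF assms, where a = a and b = b]]
    span_base[OF normal_vectors_mem(3)[OF assms, where a = a and b = b]]
  by (simp_all add: span_normal)

lemmas normal_values [simp] = normal_family_values[OF normal]

definition proj :: "'w \<Rightarrow> 'w" where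
  "proj x = x - \<epsilon>1 x *\<^sub>R e - \<epsilon>2 x *\<^sub>R I e"

lemma proj_in_V [simp]: "proj x \<in> V"
  using complement by (simp add: proj_def)

lemma proj_V [simp]: "v \<in> V \<Longrightarrow> proj v = v"
  by (simp add: proj_def)

lemma proj_frame [simp]: "proj e = 0" "proj (I e) = 0"
  by (simp_all add: proj_def)

lemma linear_proj: "linear proj"
  unfolding proj_def using linear_\<epsilon>1 linear_\<epsilon>2
  by (intro linearI) (simp_all add: linear_add linear_scale algebra_simps)

lemma decompose: "\<epsilon>1 x *\<^sub>R e + \<epsilon>2 x *\<^sub>R I e + proj x = x"
  by (simp add: proj_def)

definition basis_vec :: "bidx \<Rightarrow> 'w" where
  "basis_vec i = (case i of Ie1 \<Rightarrow> e | Ie2 \<Rightarrow> I e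
     | Ia1 k \<Rightarrow> a k | Ia2 k \<Rightarrow> I (a k) | Ib1 k \<Rightarrow> b k | Ib2 k \<Rightarrow> - I (b k))"

text \<open>On \<open>V\<close>, the functional dual to a basis vector is the pairing under \<open>\<Omega> e\<close> with its partner
  in the normal family.\<close>

definition dual_form :: "bidx \<Rightarrow> 'w \<Rightarrow> real" where
  "dual_form i x = (case i of Ie1 \<Rightarrow> \<epsilon>1 x | Ie2 \<Rightarrow> \<epsilon>2 x
     | Ia1 k \<Rightarrow> - \<Omega> e (b k) (I (proj x)) | Ia2 k \<Rightarrow> - \<Omega> e (b k) (proj x)
     | Ib1 k \<Rightarrow> \<Omega> e (a k) (I (proj x)) | Ib2 k \<Rightarrow> - \<Omega> e (a k) (proj x))"

lemma basis_vec_simps [simp]: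
  "basis_vec Ie1 = e" "basis_vec Ie2 = I e" "basis_vec (Ia1 k) = a k" "basis_vec (Ia2 k) = I (a k)"
  "basis_vec (Ib1 k) = b k" "basis_vec (Ib2 k) = - I (b k)"
  by (simp_all add: basis_vec_def)

lemma linear_dual_form: "linear (dual_form i)"
proof -
  have "linear (\<lambda>x. \<Omega> e c (proj x))" "linear (\<lambda>x. \<Omega> e c (I (proj x)))" for c
    using linear_compose[OF linear_proj linear_right] linear_compose[OF linear_compose[OF linear_proj linear_I] linear_right]
    by (simp_all add: o_def)
  then show ?thesis
    using linear_\<epsilon>1 linear_\<epsilon>2 by (cases i) (simp_all add: dual_form_def[abs_def] linear_compose_neg)
qed

lemma dual_form_basis_vec:
  assumes "i \<in> bidx_set n" "j \<in> bidx_set n"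
  shows "dual_form i (basis_vec j) = (if i = j then 1 else 0)"
  using assms by (cases i; cases j; simp add: dual_form_def)

lemma basis_vec_V_image:
  "basis_vec ` (bidx_set n - {Ie1, Ie2}) = normal_vectors n a b"
  unfolding bidx_set_minus_frame image_Un image_image normal_vectors_def by auto

lemma span_basis_vec_V: "span (basis_vec ` (bidx_set n - {Ie1, Ie2})) = V"
  by (simp add: basis_vec_V_image span_normal)

lemma is_dual_family: "is_dual_family basis_vec dual_form (bidx_set n)"
  by (simp add: is_dual_family_def linear_dual_form dual_form_basis_vec)

lemma is_basis_family: "is_basis_family basis_vec (bidx_set n)"
proof -
  have dual: "\<forall>i\<in>bidx_set n. linear (dual_form i)"
    "\<forall>i\<in>bidx_set n. \<forall>j\<in>bidx_set n. dual_form i (basis_vec j) = (if i = j then 1 else 0)"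
    by (simp_all add: linear_dual_form dual_form_basis_vec)
  have "x \<in> span (basis_vec ` bidx_set n)" for x
  proof -
    have "V \<subseteq> span (basis_vec ` bidx_set n)"
      unfolding span_basis_vec_V[symmetric] by (rule span_mono) auto
    then have "proj x \<in> span (basis_vec ` bidx_set n)" by auto
    moreover have "e \<in> basis_vec ` bidx_set n" "I e \<in> basis_vec ` bidx_set n"
      using basis_vec_simps(1,2) bidx_set_mem(1,2) by (metis image_eqI)+
    ultimately have "\<epsilon>1 x *\<^sub>R e + \<epsilon>2 x *\<^sub>R I e + proj x \<in> span (basis_vec ` bidx_set n)"
      by (intro span_add span_scale) (auto intro: span_base)
    then show ?thesis by (simp only: decompose)
  qed
  then show ?thesis
    using independent_if_dual_family[OF dual] by (auto simp: is_basis_family_def)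
qed

lemma dim_V: "dim V = 4 * n"
proof -
  have sub: "bidx_set n - {Ie1, Ie2} \<subseteq> bidx_set n" by auto
  have "inj_on basis_vec (bidx_set n)" "independent (basis_vec ` bidx_set n)"
    using is_basis_family by (auto simp: is_basis_family_def)
  then have "independent (basis_vec ` (bidx_set n - {Ie1, Ie2}))"
    and "card (basis_vec ` (bidx_set n - {Ie1, Ie2})) = 4 * n"
    using independent_mono[OF _ image_mono[OF sub]] card_image[OF inj_on_subset[OF _ sub]]
      card_bidx_set_minus_frame by auto
  then show ?thesis
    unfolding span_basis_vec_V[symmetric] by (simp add: dim_eq_card_independent)
qed

lemma dual_form_frame [simp]: "dual_form Ie1 x = \<epsilon>1 x" "dual_form Ie2 x = \<epsilon>2 x"
  by (simp_all add: dual_form_def)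

lemma dual_form_proj [simp]:
  "dual_form (Ia1 k) (proj x) = dual_form (Ia1 k) x" "dual_form (Ia2 k) (proj x) = dual_form (Ia2 k) x"
  "dual_form (Ib1 k) (proj x) = dual_form (Ib1 k) x" "dual_form (Ib2 k) (proj x) = dual_form (Ib2 k) x"
  by (simp_all add: dual_form_def)

lemma dual_form_I:
  assumes "v \<in> V"
  shows "dual_form (Ia1 k) (I v) = - dual_form (Ia2 k) v" "dual_form (Ia2 k) (I v) = dual_form (Ia1 k) v"
    "dual_form (Ib1 k) (I v) = dual_form (Ib2 k) v" "dual_form (Ib2 k) (I v) = - dual_form (Ib1 k) v"
  using assms by (simp_all add: dual_form_def)

lemma pairing_normal_vectors:
  assumes "u \<in> V" "k \<in> {1..n}"
  shows "\<Omega> e u (a k) = dual_form (Ib2 k) u" "\<Omega> e u (I (a k)) = - dual_form (Ib1 k) u"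
    "\<Omega> e u (b k) = dual_form (Ia2 k) u" "\<Omega> e u (I (b k)) = dual_form (Ia1 k) u"
  using assms antisymmetric[of u] by (simp_all add: dual_form_def I_symmetric)

lemma expansion_in_V:
  assumes "v \<in> V"
  shows "v = (\<Sum>k=1..n. dual_form (Ia1 k) v *\<^sub>R a k + dual_form (Ia2 k) v *\<^sub>R I (a k)
    + dual_form (Ib1 k) v *\<^sub>R b k - dual_form (Ib2 k) v *\<^sub>R I (b k))"
proof -
  have "v = (\<Sum>i\<in>bidx_set n - {Ie1, Ie2}. dual_form i v *\<^sub>R basis_vec i)"
    using assms span_basis_vec_V
    by (intro dual_family_expansion) (simp_all add: linear_dual_form dual_form_basis_vec)
  also have "\<dots> = (\<Sum>k=1..n. dual_form (Ia1 k) v *\<^sub>R a k + dual_form (Ia2 k) v *\<^sub>R I (a k)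
    + dual_form (Ib1 k) v *\<^sub>R b k - dual_form (Ib2 k) v *\<^sub>R I (b k))"
    by (simp add: sum_bidx_set_minus_frame)
  finally show ?thesis .
qed

definition normal_form_e :: "'w \<Rightarrow> 'w \<Rightarrow> real" where
  "normal_form_e y z = (\<Sum>k=1..n. wedge2 (dual_form (Ib2 k)) (dual_form (Ia1 k)) y z
     - wedge2 (dual_form (Ib1 k)) (dual_form (Ia2 k)) y z)"

definition normal_form_Ie :: "'w \<Rightarrow> 'w \<Rightarrow> real" where
  "normal_form_Ie y z = (\<Sum>k=1..n. wedge2 (dual_form (Ib1 k)) (dual_form (Ia1 k)) y z
     + wedge2 (dual_form (Ib2 k)) (dual_form (Ia2 k)) y z)"

lemma normal_form_proj [simp]: "normal_form_e (proj y) (proj z) = normal_form_e y z" "normal_form_Ie (proj y) (proj z) = normal_form_Ie y z"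
  by (simp_all add: normal_form_e_def normal_form_Ie_def wedge2_def)

lemma Omega_e_eq_normal_form:
  assumes "u \<in> V" "v \<in> V"
  shows "\<Omega> e u v = normal_form_e u v"
proof -
  have "\<Omega> e u v = \<Omega> e u (\<Sum>k=1..n. dual_form (Ia1 k) v *\<^sub>R a k + dual_form (Ia2 k) v *\<^sub>R I (a k)
    + dual_form (Ib1 k) v *\<^sub>R b k - dual_form (Ib2 k) v *\<^sub>R I (b k))"
    using expansion_in_V[OF assms(2)] by (rule arg_cong)
  also have "\<dots> = (\<Sum>k=1..n. dual_form (Ia1 k) v * \<Omega> e u (a k) + dual_form (Ia2 k) v * \<Omega> e u (I (a k))
    + dual_form (Ib1 k) v * \<Omega> e u (b k) - dual_form (Ib2 k) v * \<Omega> e u (I (b k)))"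
    by (simp add: linear_sum[OF linear_right])
  also have "\<dots> = normal_form_e u v"
    unfolding normal_form_e_def using assms(1)
    by (intro sum.cong) (simp_all add: pairing_normal_vectors wedge2_def algebra_simps)
  finally show ?thesis .
qed

lemma Omega_Ie_eq_normal_form:
  assumes "u \<in> V" "v \<in> V"
  shows "\<Omega> (I e) u v = normal_form_Ie u v"
proof -
  have "\<Omega> (I e) u v = - normal_form_e u (I v)"
    using assms by (simp add: Omega_I_e Omega_e_eq_normal_form)
  also have "\<dots> = normal_form_Ie u v"
    unfolding normal_form_e_def normal_form_Ie_def sum_negf[symmetric] using assms(2)
    by (intro sum.cong) (simp_all add: wedge2_def dual_form_I algebra_simps)
  finally show ?thesis .
qed

lemma Omega_eq_normal_forms:
  "\<Omega> x y z = \<epsilon>1 x * normal_form_e y z - \<epsilon>1 y * normal_form_e x z + \<epsilon>1 z * normal_form_e x y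
    + \<epsilon>2 x * normal_form_Ie y z - \<epsilon>2 y * normal_form_Ie x z + \<epsilon>2 z * normal_form_Ie x y
    + (\<epsilon>1 x * \<epsilon>2 y - \<epsilon>2 x * \<epsilon>1 y) * \<Omega> e (I e) z - (\<epsilon>1 x * \<epsilon>2 z - \<epsilon>2 x * \<epsilon>1 z) * \<Omega> e (I e) y
    + (\<epsilon>1 y * \<epsilon>2 z - \<epsilon>2 y * \<epsilon>1 z) * \<Omega> e (I e) x"
proof -
  have \<nu>_proj: "\<Omega> e (I e) (proj w) = \<Omega> e (I e) w" for w
  proof -
    have "\<Omega> e (I e) w = \<Omega> e (I e) (\<epsilon>1 w *\<^sub>R e + \<epsilon>2 w *\<^sub>R I e + proj w)" by (simp only: decompose)
    then show ?thesis by simp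
  qed
  have "\<Omega> x y z = \<Omega> (\<epsilon>1 x *\<^sub>R e + \<epsilon>2 x *\<^sub>R I e + proj x) (\<epsilon>1 y *\<^sub>R e + \<epsilon>2 y *\<^sub>R I e + proj y)
      (\<epsilon>1 z *\<^sub>R e + \<epsilon>2 z *\<^sub>R I e + proj z)"
    by (simp only: decompose)
  also have "\<dots> = \<epsilon>1 x * \<Omega> e (proj y) (proj z) - \<epsilon>1 y * \<Omega> e (proj x) (proj z)
      + \<epsilon>1 z * \<Omega> e (proj x) (proj y) + \<epsilon>2 x * \<Omega> (I e) (proj y) (proj z)
      - \<epsilon>2 y * \<Omega> (I e) (proj x) (proj z) + \<epsilon>2 z * \<Omega> (I e) (proj x) (proj y)
      + (\<epsilon>1 x * \<epsilon>2 y - \<epsilon>2 x * \<epsilon>1 y) * \<Omega> e (I e) (proj z)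
      - (\<epsilon>1 x * \<epsilon>2 z - \<epsilon>2 x * \<epsilon>1 z) * \<Omega> e (I e) (proj y)
      + (\<epsilon>1 y * \<epsilon>2 z - \<epsilon>2 y * \<epsilon>1 z) * \<Omega> e (I e) (proj x)"
    by (rule expand_along_plane) (simp add: vanishes_on_V)
  finally show ?thesis by (simp add: Omega_e_eq_normal_form Omega_Ie_eq_normal_form \<nu>_proj)
qed

lemma Omega_expansion:
  "\<Omega> x y z =
    (\<Sum>k=1..n. wedge3 (dual_form (Ib1 k)) (dual_form (Ia1 k)) (dual_form Ie2) x y z
      + wedge3 (dual_form (Ib2 k)) (dual_form (Ia2 k)) (dual_form Ie2) x y z
      - wedge3 (dual_form (Ib1 k)) (dual_form (Ia2 k)) (dual_form Ie1) x y z
      + wedge3 (dual_form (Ib2 k)) (dual_form (Ia1 k)) (dual_form Ie1) x y z)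
    + wedge3 (\<Omega> e (I e)) (dual_form Ie1) (dual_form Ie2) x y z"
proof -
  let ?w = "\<lambda>i j. wedge2 (dual_form i) (dual_form j)"
  have "(\<Sum>k=1..n. wedge3 (dual_form (Ib1 k)) (dual_form (Ia1 k)) (dual_form Ie2) x y z
      + wedge3 (dual_form (Ib2 k)) (dual_form (Ia2 k)) (dual_form Ie2) x y z
      - wedge3 (dual_form (Ib1 k)) (dual_form (Ia2 k)) (dual_form Ie1) x y z
      + wedge3 (dual_form (Ib2 k)) (dual_form (Ia1 k)) (dual_form Ie1) x y z)
    = (\<Sum>k=1..n.
        \<epsilon>1 x * (?w (Ib2 k) (Ia1 k) y z - ?w (Ib1 k) (Ia2 k) y z)
      - \<epsilon>1 y * (?w (Ib2 k) (Ia1 k) x z - ?w (Ib1 k) (Ia2 k) x z)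
      + \<epsilon>1 z * (?w (Ib2 k) (Ia1 k) x y - ?w (Ib1 k) (Ia2 k) x y)
      + \<epsilon>2 x * (?w (Ib1 k) (Ia1 k) y z + ?w (Ib2 k) (Ia2 k) y z)
      - \<epsilon>2 y * (?w (Ib1 k) (Ia1 k) x z + ?w (Ib2 k) (Ia2 k) x z)
      + \<epsilon>2 z * (?w (Ib1 k) (Ia1 k) x y + ?w (Ib2 k) (Ia2 k) x y))"
    by (rule sum.cong) (simp_all add: wedge3_eq_wedge2 algebra_simps)
  also have "\<dots> = \<epsilon>1 x * normal_form_e y z - \<epsilon>1 y * normal_form_e x z + \<epsilon>1 z * normal_form_e x y
      + \<epsilon>2 x * normal_form_Ie y z - \<epsilon>2 y * normal_form_Ie x z + \<epsilon>2 z * normal_form_Ie x y"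
    by (simp only: normal_form_e_def normal_form_Ie_def sum_distrib_left sum.distrib sum_subtractf
        distrib_left right_diff_distrib)
  moreover have "wedge3 (\<Omega> e (I e)) (dual_form Ie1) (dual_form Ie2) x y z =
      (\<epsilon>1 x * \<epsilon>2 y - \<epsilon>2 x * \<epsilon>1 y) * \<Omega> e (I e) z - (\<epsilon>1 x * \<epsilon>2 z - \<epsilon>2 x * \<epsilon>1 z) * \<Omega> e (I e) y
      + (\<epsilon>1 y * \<epsilon>2 z - \<epsilon>2 y * \<epsilon>1 z) * \<Omega> e (I e) x"
    by (simp add: wedge3_def algebra_simps)
  ultimately show ?thesis using Omega_eq_normal_forms[of x y z] by linarith
qed

end

lemma exists_normal_frame:
  fixes \<sigma> :: "'w::real_vector \<Rightarrow> 't::real_vector" and S :: "'w set"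
  assumes cxI: "complex_structure I" and cxj: "complex_structure j"
    and fin: "finite S" "span S = UNIV"
    and lin_\<sigma>: "linear \<sigma>" and cx_\<sigma>: "\<And>x. \<sigma> (I x) = j (\<sigma> x)" and surj: "surj \<sigma>"
    and V_ker: "V = {x. \<sigma> x = 0}" and dim_T: "dim (UNIV :: 't set) = 2"
    and tri: "trilinear \<Omega>" and alt: "alternating3 \<Omega>"
    and vanish: "\<And>u v w. u \<in> V \<Longrightarrow> v \<in> V \<Longrightarrow> w \<in> V \<Longrightarrow> \<Omega> u v w = 0"
    and nondeg: "\<And>\<xi> u. \<sigma> \<xi> \<noteq> 0 \<Longrightarrow> u \<in> V \<Longrightarrow> \<forall>v\<in>V. \<Omega> \<xi> u v = 0 \<Longrightarrow> u = 0"
    and I_slice: "\<And>\<xi> u v. u \<in> V \<Longrightarrow> v \<in> V \<Longrightarrow> \<Omega> (I \<xi>) u v = - \<Omega> \<xi> u (I v)"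
  obtains e \<epsilon>1 \<epsilon>2 n a b
  where "normal_frame \<Omega> I e V \<epsilon>1 \<epsilon>2 n a b" and "span {\<sigma> e, \<sigma> (I e)} = UNIV"
proof -
  obtain e \<epsilon>1 \<epsilon>2 where frame: "\<sigma> e \<noteq> 0" "span {\<sigma> e, \<sigma> (I e)} = UNIV" "linear \<epsilon>1" "linear \<epsilon>2"
    "\<epsilon>1 e = 1" "\<epsilon>1 (I e) = 0" "\<epsilon>2 e = 0" "\<epsilon>2 (I e) = 1"
    "\<And>v. \<sigma> v = 0 \<Longrightarrow> \<epsilon>1 v = 0" "\<And>v. \<sigma> v = 0 \<Longrightarrow> \<epsilon>2 v = 0"
    "\<And>x. \<sigma> (x - \<epsilon>1 x *\<^sub>R e - \<epsilon>2 x *\<^sub>R I e) = 0"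
    using exists_transversal_frame[OF cxj lin_\<sigma> cx_\<sigma> surj dim_T] by blast
  have "linear I" "\<And>x. I (I x) = - x" using cxI by (auto simp: complex_structure_def)
  moreover have "subspace V"
    using lin_\<sigma> by (simp add: V_ker subspace_def linear_0 linear_add linear_scale)
  moreover have I_V: "\<And>v. v \<in> V \<Longrightarrow> I v \<in> V"
    using cx_\<sigma> cxj by (simp add: V_ker complex_structure_def linear_0)
  ultimately have form: "compatible_form I (\<Omega> e) V"
    using I_slice tri alt
    by (intro alternating_trilinear.compatible_form_slice) (simp_all add: alternating_trilinear.intro)
  have "compatible_form.nondegenerate_on (\<Omega> e) V"
    using nondeg[OF frame(1)] by (simp add: compatible_form.nondegenerate_on_def[OF form])
  then obtain n a b where "compatible_form.normal_family I (\<Omega> e) n a b"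
    and "span (compatible_form.normal_vectors I n a b) = V"
    using compatible_form.exists_normal_family[OF form fin \<open>subspace V\<close> order_refl I_V] by blast
  then have "normal_frame \<Omega> I e V \<epsilon>1 \<epsilon>2 n a b"
    using frame(3-11) vanish I_slice
    by (intro normal_frame.intro normal_frame_axioms.intro alternating_trilinear.intro form tri alt)
      (simp_all add: V_ker)
  with frame(2) show thesis using that by blast
qed

theorem mainTheorem5:
  fixes I :: "'w::real_vector \<Rightarrow> 'w" and j :: "'t::real_vector \<Rightarrow> 't"
    and \<sigma> :: "'w \<Rightarrow> 't" and V :: "'w set"
    and \<Omega> :: "'w \<Rightarrow> 'w \<Rightarrow> 'w \<Rightarrow> real"
  assumes cxI: "complex_structure I" and cxj: "complex_structure j"
    and finW: "\<exists>S. finite S \<and> span S = (UNIV :: 'w set)"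
    and lin_sigma: "linear \<sigma>" and cx_sigma: "\<forall>x. \<sigma> (I x) = j (\<sigma> x)"
    and surj_sigma: "surj \<sigma>"
    and V_ker: "V = {x. \<sigma> x = 0}"
    and dimT: "dim (UNIV :: 't set) = 2"
    and tri: "trilinear \<Omega>" and alt: "alternating3 \<Omega>"
    and i: "\<forall>v1\<in>V. \<forall>v2\<in>V. \<forall>v3\<in>V. \<Omega> v1 v2 v3 = 0"
    and ii: "\<forall>\<xi>. \<sigma> \<xi> \<noteq> 0 \<longrightarrow> (\<forall>v1\<in>V. (\<forall>v2\<in>V. \<Omega> \<xi> v1 v2 = 0) \<longrightarrow> v1 = 0)"
    and iii: "\<forall>\<xi>. \<forall>v1\<in>V. \<forall>v2\<in>V. \<Omega> (I \<xi>) v1 v2 = - \<Omega> \<xi> v1 (I v2)"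
  shows "\<exists>n::nat. dim V = 4 * n \<and>
    (\<exists>(B :: bidx \<Rightarrow> 'w) (d :: bidx \<Rightarrow> 'w \<Rightarrow> real) (\<nu> :: 'w \<Rightarrow> real).
       is_basis_family B (bidx_set n) \<and>
       is_dual_family B d (bidx_set n) \<and>
       span {\<sigma> (B Ie1), \<sigma> (B Ie2)} = UNIV \<and>
       V = span (B ` (bidx_set n - {Ie1, Ie2})) \<and>
       I (B Ie1) = B Ie2 \<and>
       (\<forall>k\<in>{1..n}. I (B (Ia1 k)) = B (Ia2 k) \<and> I (B (Ib1 k)) = - B (Ib2 k)) \<and>
       linear \<nu> \<and> \<nu> (B Ie1) = 0 \<and> \<nu> (B Ie2) = 0 \<and>
       (\<forall>x y z. \<Omega> x y z =
          (\<Sum>k=1..n.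
              wedge3 (d (Ib1 k)) (d (Ia1 k)) (d Ie2) x y z
            + wedge3 (d (Ib2 k)) (d (Ia2 k)) (d Ie2) x y z
            - wedge3 (d (Ib1 k)) (d (Ia2 k)) (d Ie1) x y z
            + wedge3 (d (Ib2 k)) (d (Ia1 k)) (d Ie1) x y z)
          + wedge3 \<nu> (d Ie1) (d Ie2) x y z))"
proof -
  obtain S :: "'w set" where S: "finite S" "span S = UNIV" using finW by blast
  have vanish: "\<And>u v w. u \<in> V \<Longrightarrow> v \<in> V \<Longrightarrow> w \<in> V \<Longrightarrow> \<Omega> u v w = 0" using i by blast
  have nondeg: "\<And>\<xi> u. \<sigma> \<xi> \<noteq> 0 \<Longrightarrow> u \<in> V \<Longrightarrow> \<forall>v\<in>V. \<Omega> \<xi> u v = 0 \<Longrightarrow> u = 0" using ii by blast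
  have I_slice: "\<And>\<xi> u v. u \<in> V \<Longrightarrow> v \<in> V \<Longrightarrow> \<Omega> (I \<xi>) u v = - \<Omega> \<xi> u (I v)" using iii by blast
  obtain e \<epsilon>1 \<epsilon>2 n a b where frame: "normal_frame \<Omega> I e V \<epsilon>1 \<epsilon>2 n a b"
    and T: "span {\<sigma> e, \<sigma> (I e)} = UNIV"
    using exists_normal_frame[OF cxI cxj S lin_sigma cx_sigma[rule_format] surj_sigma V_ker dimT tri alt
        vanish nondeg I_slice] .
  interpret normal_frame \<Omega> I e V \<epsilon>1 \<epsilon>2 n a b by (fact frame)
  show ?thesis
    using dim_V is_basis_family is_dual_family span_basis_vec_V T linear_arg3 Omega_expansion
    by (intro exI[of _ n] conjI exI[of _ basis_vec] exI[of _ dual_form] exI[of _ "\<Omega> e (I e)"]) simp_all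
qed

end
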